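(* Let $Q\ge1$, $D\ge1$, $L$ an even positive integer, and for $q=1,\dots,Q$ let $\alpha_q\ge0$, $\boldsymbol\mu_{q1},\boldsymbol\mu_{q2}\in\mathbb{R}^D$, $\boldsymbol\sigma_{q1}^2,\boldsymbol\sigma_{q2}^2\in\mathbb{R}^D$ with positive entries, and $\rho_q\in[-1,1]$. Let $s_q$ and $k_{\mathrm{ngsm}}$ be as in the context. Let the random vectors $[\mathbf{w}_{q1}^{(l)};\mathbf{w}_{q2}^{(l)}]\in\mathbb{R}^{2D}$, $q=1,\dots,Q$, $l=1,\dots,L/2$, be independent with $[\mathbf{w}_{q1}^{(l)};\mathbf{w}_{q2}^{(l)}]\sim s_q$, and write $p(\mathbf{W})=\prod_{q=1}^Q\prod_{l=1}^{L/2}s_q(\mathbf{w}_{q1}^{(l)},\mathbf{w}_{q2}^{(l)})$ for their joint law. For each $q$ define $\varphi_q:\mathbb{R}^D\to\mathbb{R}^L$ by \[ \varphi_q(\mathbf{x})=\sqrt{\alpha_q}\sqrt{\tfrac{1}{2L}}\begin{bmatrix}\big(\cos(\mathbf{w}_{q1}^{(l)\top}\mathbf{x})+\cos(\mathbf{w}_{q2}^{(l)\top}\mathbf{x})\big)_{l=1}^{L/2}\\ \big(\sin(\mathbf{w}_{q1}^{(l)\top}\mathbf{x})+\sin(\mathbf{w}_{q2}^{(l)\top}\mathbf{x})\big)_{l=1}^{L/2}\end{bmatrix}, \] and let $\varphi(\mathbf{x})=[\varphi_1(\mathbf{x})^\top,\dots,\varphi_Q(\mathbf{x})^\top]^\top\in\mathbb{R}^{QL}$.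 Then for all $\mathbf{x}_1,\mathbf{x}_2\in\mathbb{R}^D$, \[ \mathbb{E}_{p(\mathbf{W})}\big[\varphi(\mathbf{x}_1)^\top\varphi(\mathbf{x}_2)\big]=k_{\mathrm{ngsm}}(\mathbf{x}_1,\mathbf{x}_2). \]
   Context: For each $q$, set $\boldsymbol\Sigma_1=\operatorname{diag}(\boldsymbol\sigma_{q1}^2)$, $\boldsymbol\Sigma_2=\operatorname{diag}(\boldsymbol\sigma_{q2}^2)$, $\boldsymbol\Sigma_c=\rho_q\operatorname{diag}(\boldsymbol\sigma_{q1})\operatorname{diag}(\boldsymbol\sigma_{q2})$ (index $q$ suppressed), and let $\mathcal{N}_q$ denote the Gaussian density on $\mathbb{R}^{2D}$ with mean $(\boldsymbol\mu_{q1},\boldsymbol\mu_{q2})$ and covariance $\begin{bmatrix}\boldsymbol\Sigma_1&\boldsymbol\Sigma_c^\top\\ \boldsymbol\Sigma_c&\boldsymbol\Sigma_2\end{bmatrix}$. Define the probability density $s_q(\mathbf{w}_1,\mathbf{w}_2)=\tfrac12\mathcal{N}_q(\mathbf{w}_1,\mathbf{w}_2)+\tfrac12\mathcal{N}_q(-\mathbf{w}_1,-\mathbf{w}_2)$. The NG-SM kernel is \[ \begin{aligned} k_{\mathrm{ngsm}}(\mathbf{x}_1,\mathbf{x}_2)=\frac14\sum_{q=1}^Q\alpha_q\Big[&\exp\!\big(-\tfrac12(\mathbf{x}_1^\top\boldsymbol\Sigma_1\mathbf{x}_1-2\mathbf{x}_1^\top\boldsymbol\Sigma_c\mathbf{x}_2+\mathbf{x}_2^\top\boldsymbol\Sigma_2\mathbf{x}_2)\big)\cos(\boldsymbol\mu_{q1}^\top\mathbf{x}_1-\boldsymbol\mu_{q2}^\top\mathbf{x}_2)\\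 &+\exp\!\big(-\tfrac12(\mathbf{x}_2^\top\boldsymbol\Sigma_1\mathbf{x}_2-2\mathbf{x}_1^\top\boldsymbol\Sigma_c\mathbf{x}_2+\mathbf{x}_1^\top\boldsymbol\Sigma_2\mathbf{x}_1)\big)\cos(\boldsymbol\mu_{q1}^\top\mathbf{x}_2-\boldsymbol\mu_{q2}^\top\mathbf{x}_1)\\ &+\exp\!\big(-\tfrac12(\mathbf{x}_1-\mathbf{x}_2)^\top\boldsymbol\Sigma_1(\mathbf{x}_1-\mathbf{x}_2)\big)\cos(\boldsymbol\mu_{q1}^\top(\mathbf{x}_1-\mathbf{x}_2))\\ &+\exp\!\big(-\tfrac12(\mathbf{x}_1-\mathbf{x}_2)^\top\boldsymbol\Sigma_2(\mathbf{x}_1-\mathbf{x}_2)\big)\cos(\boldsymbol\mu_{q2}^\top(\mathbf{x}_1-\mathbf{x}_2))\Big]. \end{aligned} \] *)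

theory Defs
  imports "HOL-Probability.Probability"
begin

text \<open>Index conventions: components q = 0..Q-1, samples l = 0..L/2-1 (shifted by one
  from the paper). Parameters are given as functions of q; the variance vectors
  v1 q, v2 q play the role of sigma_q1^2, sigma_q2^2, and sigma_qi = entrywise sqrt.\<close>

definition sdev :: "real ^ 'd \<Rightarrow> real ^ 'd" where
  "sdev v = (\<chi> i. sqrt (v $ i))"

definition std_gauss2 :: "((real ^ 'd) \<times> (real ^ 'd)) measure" where
  "std_gauss2 = density lborel
     (\<lambda>(z1, z2). ennreal ((\<Prod>i\<in>UNIV. std_normal_density (z1 $ i)) *
                            (\<Prod>i\<in>UNIV. std_normal_density (z2 $ i))))"

text \<open>The Gaussian N_q on R^{2D} with mean (mu1, mu2) and covariance
  [[diag v1, Sigma_c^T],[Sigma_c, diag v2]], Sigma_c = rho diag(sqrt v1) diag(sqrt v2),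
  realised as the law of an affine image mean + A z of a standard normal z with
  A A^T equal to the covariance (valid also in the degenerate case |rho| = 1).\<close>
definition ngsm_gauss ::
  "real ^ 'd \<Rightarrow> real ^ 'd \<Rightarrow> real ^ 'd \<Rightarrow> real ^ 'd \<Rightarrow> real \<Rightarrow> ((real ^ 'd) \<times> (real ^ 'd)) measure" where
  "ngsm_gauss mu1 mu2 v1 v2 rho = distr std_gauss2 borel
     (\<lambda>(z1, z2). ( (\<chi> i. mu1 $ i + sdev v1 $ i * z1 $ i),
                   (\<chi> i. mu2 $ i + sdev v2 $ i * (rho * z1 $ i + sqrt (1 - rho\<^sup>2) * z2 $ i))))"

text \<open>The mixture s_q = 1/2 N_q(w) + 1/2 N_q(-w): law of eps * w with w ~ N_q and
  eps a fair random sign independent of w.\<close>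
definition ngsm_s ::
  "real ^ 'd \<Rightarrow> real ^ 'd \<Rightarrow> real ^ 'd \<Rightarrow> real ^ 'd \<Rightarrow> real \<Rightarrow> ((real ^ 'd) \<times> (real ^ 'd)) measure" where
  "ngsm_s mu1 mu2 v1 v2 rho =
     distr (measure_pmf (bernoulli_pmf (1/2)) \<Otimes>\<^sub>M ngsm_gauss mu1 mu2 v1 v2 rho) borel
       (\<lambda>(b, w). if b then w else - w)"

definition ngsm_joint ::
  "nat \<Rightarrow> nat \<Rightarrow> (nat \<Rightarrow> real ^ 'd) \<Rightarrow> (nat \<Rightarrow> real ^ 'd) \<Rightarrow> (nat \<Rightarrow> real ^ 'd) \<Rightarrow>
   (nat \<Rightarrow> real ^ 'd) \<Rightarrow> (nat \<Rightarrow> real) \<Rightarrow> (nat \<times> nat \<Rightarrow> (real ^ 'd) \<times> (real ^ 'd)) measure" where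
  "ngsm_joint Q L mu1 mu2 v1 v2 rho =
     PiM ({..<Q} \<times> {..<L div 2}) (\<lambda>(q, l). ngsm_s (mu1 q) (mu2 q) (v1 q) (v2 q) (rho q))"

definition ngsm_feat ::
  "nat \<Rightarrow> (nat \<Rightarrow> real) \<Rightarrow> (nat \<times> nat \<Rightarrow> (real ^ 'd) \<times> (real ^ 'd)) \<Rightarrow> nat \<Rightarrow> real ^ 'd \<Rightarrow> nat \<Rightarrow> real" where
  "ngsm_feat L alpha W q x j =
     sqrt (alpha q) * sqrt (1 / (2 * real L)) *
     (if j < L div 2
      then cos (fst (W (q, j)) \<bullet> x) + cos (snd (W (q, j)) \<bullet> x)
      else sin (fst (W (q, j - L div 2)) \<bullet> x) + sin (snd (W (q, j - L div 2)) \<bullet> x))"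

definition ngsm_inner ::
  "nat \<Rightarrow> nat \<Rightarrow> (nat \<Rightarrow> real) \<Rightarrow> (nat \<times> nat \<Rightarrow> (real ^ 'd) \<times> (real ^ 'd)) \<Rightarrow> real ^ 'd \<Rightarrow> real ^ 'd \<Rightarrow> real" where
  "ngsm_inner Q L alpha W x1 x2 =
     (\<Sum>q<Q. \<Sum>j<L. ngsm_feat L alpha W q x1 j * ngsm_feat L alpha W q x2 j)"

definition diag_form :: "real ^ 'd \<Rightarrow> real ^ 'd \<Rightarrow> real ^ 'd \<Rightarrow> real" where
  "diag_form v x y = (\<Sum>i\<in>UNIV. v $ i * x $ i * y $ i)"

definition k_ngsm ::
  "nat \<Rightarrow> (nat \<Rightarrow> real) \<Rightarrow> (nat \<Rightarrow> real ^ 'd) \<Rightarrow> (nat \<Rightarrow> real ^ 'd) \<Rightarrow> (nat \<Rightarrow> real ^ 'd) \<Rightarrow>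
   (nat \<Rightarrow> real ^ 'd) \<Rightarrow> (nat \<Rightarrow> real) \<Rightarrow> real ^ 'd \<Rightarrow> real ^ 'd \<Rightarrow> real" where
  "k_ngsm Q alpha mu1 mu2 v1 v2 rho x1 x2 = (1/4) * (\<Sum>q<Q. alpha q * (
     let S1 = v1 q; S2 = v2 q; Sc = (\<chi> i. rho q * (sdev (v1 q) $ i * sdev (v2 q) $ i)) in
       exp (- (1/2) * (diag_form S1 x1 x1 - 2 * diag_form Sc x1 x2 + diag_form S2 x2 x2))
         * cos (mu1 q \<bullet> x1 - mu2 q \<bullet> x2)
     + exp (- (1/2) * (diag_form S1 x2 x2 - 2 * diag_form Sc x1 x2 + diag_form S2 x1 x1))
         * cos (mu1 q \<bullet> x2 - mu2 q \<bullet> x1)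
     + exp (- (1/2) * diag_form S1 (x1 - x2) (x1 - x2)) * cos (mu1 q \<bullet> (x1 - x2))
     + exp (- (1/2) * diag_form S2 (x1 - x2) (x1 - x2)) * cos (mu2 q \<bullet> (x1 - x2))))"

end

theory Submission
  imports Defs
begin

text \<open>
  Expanding the feature product, a single sample w = (w1, w2) of component q contributes
  alpha_q / (2L) times
    cos (w1 x1 - w2 x2) + cos (w1 x2 - w2 x1) + cos (w1 (x1 - x2)) + cos (w2 (x1 - x2)).
  This function is even in w, so its mean under the symmetrised law s_q equals its mean under
  the Gaussian N_q. Every term has the form cos (w1 y1 - w2 y2), which is the cosine of an affine
  function c + a z of a standard normal z; by the characteristic function of the standard normal
  its mean is cos c exp (-|a|^2 / 2), and |a|^2 is exactly the quadratic form in the exponents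
  of k_ngsm. Linearity of expectation over the L/2 independent samples of each component gives
  the kernel.
\<close>

section \<open>The standard Gaussian on a Euclidean space\<close>

definition std_gauss :: "'a::euclidean_space measure" where
  "std_gauss = density lborel (\<lambda>z. ennreal (\<Prod>b\<in>Basis. std_normal_density (z \<bullet> b)))"

lemma sets_std_gauss [measurable_cong]: "sets std_gauss = sets borel"
  by (simp add: std_gauss_def)

lemma prob_space_std_gauss: "prob_space (std_gauss :: 'a::euclidean_space measure)"
proof
  have std_normal: "(\<integral>\<^sup>+x. ennreal (std_normal_density x) \<partial>lborel) = 1"
  proof -
    interpret prob_space "density lborel std_normal_density"
      by (rule prob_space_normal_density) simp
    show ?thesis
      using emeasure_space_1 by (simp add: emeasure_density)
  qed
  have "emeasure (std_gauss :: 'a measure) (space std_gauss)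
      = (\<integral>\<^sup>+z. (\<Prod>b\<in>(Basis::'a set). ennreal (std_normal_density (z \<bullet> b))) \<partial>lborel)"
    unfolding std_gauss_def
    by (simp add: emeasure_density prod_ennreal normal_density_nonneg)
  also have "\<dots> = (\<Prod>b\<in>(Basis::'a set). \<integral>\<^sup>+x. ennreal (std_normal_density x) \<partial>lborel)"
    by (rule nn_integral_lborel_prod) auto
  finally show "emeasure (std_gauss :: 'a measure) (space std_gauss) = 1"
    by (simp add: std_normal)
qed

lemma char_std_gauss:
  fixes a :: "'a::euclidean_space"
  shows "(\<integral>z. iexp (a \<bullet> z) \<partial>std_gauss) = complex_of_real (exp (- (a \<bullet> a) / 2))"
proof -
  interpret product_sigma_finite "\<lambda>_. lborel :: real measure" by standard
  let ?S = "\<lambda>f::'a \<Rightarrow> real. \<Sum>b\<in>Basis. f b *\<^sub>R b"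
  let ?\<phi> = "\<lambda>b x. complex_of_real (std_normal_density x) * iexp ((a \<bullet> b) * x)"
  have inner_S: "?S f \<bullet> b = f b" if "b \<in> Basis" for f b
    using that by (simp add: inner_sum_left inner_Basis if_distrib cong: if_cong)
  have "(\<integral>z. iexp (a \<bullet> z) \<partial>std_gauss)
      = (\<integral>z. (\<Prod>b\<in>Basis. std_normal_density (z \<bullet> b)) *\<^sub>R iexp (a \<bullet> z) \<partial>(lborel::'a measure))"
    unfolding std_gauss_def
    by (subst integral_density) (auto simp: normal_density_nonneg prod_nonneg)
  also have "\<dots> = (\<integral>f. (\<Prod>b\<in>Basis. std_normal_density (?S f \<bullet> b)) *\<^sub>R iexp (a \<bullet> ?S f)
                      \<partial>(\<Pi>\<^sub>M b\<in>(Basis::'a set). lborel))"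
    by (subst lborel_eq) (subst integral_distr, auto)
  also have "\<dots> = (\<integral>f. (\<Prod>b\<in>(Basis::'a set). ?\<phi> b (f b)) \<partial>(\<Pi>\<^sub>M b\<in>(Basis::'a set). lborel))"
  proof (intro Bochner_Integration.integral_cong refl)
    fix f :: "'a \<Rightarrow> real"
    have "a \<bullet> ?S f = (\<Sum>b\<in>Basis. (a \<bullet> b) * f b)"
      by (simp add: inner_sum_right mult.commute)
    then have "iexp (a \<bullet> ?S f) = (\<Prod>b\<in>(Basis::'a set). iexp ((a \<bullet> b) * f b))"
      by (simp add: distrib_left sum_distrib_left exp_sum)
    then show "(\<Prod>b\<in>Basis. std_normal_density (?S f \<bullet> b)) *\<^sub>R iexp (a \<bullet> ?S f)
        = (\<Prod>b\<in>Basis. ?\<phi> b (f b))"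
      by (simp add: inner_S scaleR_conv_of_real prod.distrib)
  qed
  also have "\<dots> = (\<Prod>b\<in>(Basis::'a set). \<integral>x. ?\<phi> b x \<partial>lborel)"
  proof (rule product_integral_prod)
    fix b :: 'a
    interpret prob_space "density lborel std_normal_density"
      by (rule prob_space_normal_density) simp
    have "integrable (density lborel std_normal_density) (\<lambda>x. iexp ((a \<bullet> b) * x))"
      by (rule integrable_iexp) auto
    then show "integrable lborel (?\<phi> b)"
      by (subst (asm) integrable_density) (auto simp: normal_density_nonneg scaleR_conv_of_real)
  qed simp
  also have "\<dots> = (\<Prod>b\<in>(Basis::'a set). complex_of_real (exp (- ((a \<bullet> b)\<^sup>2) / 2)))"
  proof (rule prod.cong[OF refl])
    fix b :: 'a
    have "char std_normal_distribution (a \<bullet> b) = (\<integral>x. ?\<phi> b x \<partial>lborel)"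
      unfolding char_def
      by (subst integral_density) (auto simp: normal_density_nonneg scaleR_conv_of_real)
    then show "(\<integral>x. ?\<phi> b x \<partial>lborel) = complex_of_real (exp (- ((a \<bullet> b)\<^sup>2) / 2))"
      by (simp add: char_std_normal_distribution)
  qed
  also have "\<dots> = complex_of_real (exp (- (a \<bullet> a) / 2))"
    by (simp add: exp_sum[symmetric] sum_divide_distrib[symmetric] sum_negf euclidean_inner[of a a]
        power2_eq_square of_real_prod[symmetric] del: of_real_prod)
  finally show ?thesis .
qed

lemma integral_cos_std_gauss:
  fixes a :: "'a::euclidean_space"
  shows "(\<integral>z. cos (c + a \<bullet> z) \<partial>std_gauss) = cos c * exp (- (a \<bullet> a) / 2)"
proof -
  interpret prob_space "std_gauss :: 'a measure" by (rule prob_space_std_gauss)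
  have int: "integrable std_gauss (\<lambda>z. iexp c * iexp (a \<bullet> z))"
    by (intro integrable_mult_right integrable_iexp) auto
  have "(\<integral>z. cos (c + a \<bullet> z) \<partial>std_gauss) = (\<integral>z. Re (iexp c * iexp (a \<bullet> z)) \<partial>std_gauss)"
    by (intro Bochner_Integration.integral_cong refl)
       (simp add: exp_add[symmetric] cis_conv_exp[symmetric] distrib_left cos_add del: exp_add)
  also have "\<dots> = Re (\<integral>z. iexp c * iexp (a \<bullet> z) \<partial>std_gauss)"
    by (rule integral_Re[OF int])
  also have "\<dots> = Re (iexp c * complex_of_real (exp (- (a \<bullet> a) / 2)))"
    by (simp add: char_std_gauss)
  also have "\<dots> = cos c * exp (- (a \<bullet> a) / 2)"
    by (simp add: cis_conv_exp[symmetric])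
  finally show ?thesis .
qed

lemma prod_Basis_vec: "(\<Prod>b\<in>(Basis::(real^'d) set). f (z \<bullet> b)) = (\<Prod>i\<in>UNIV. f (z $ i))"
proof -
  have Basis: "(Basis::(real^'d) set) = range (\<lambda>i. axis i 1)"
    by (auto simp: Basis_vec_def)
  have "inj (\<lambda>i::'d. axis i (1::real))"
    by (auto simp: inj_def axis_eq_axis)
  then show ?thesis
    by (simp add: Basis prod.reindex inner_axis)
qed

lemma prod_Basis_prod:
  fixes z :: "'a::euclidean_space \<times> 'b::euclidean_space"
  shows "(\<Prod>b\<in>Basis. f (z \<bullet> b)) = (\<Prod>b\<in>Basis. f (fst z \<bullet> b)) * (\<Prod>b\<in>Basis. f (snd z \<bullet> b))"
  unfolding Basis_prod_def
  by (subst prod.union_disjoint) (auto simp: prod.reindex inj_on_def inner_Pair_0)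

lemma std_gauss2_eq_std_gauss: "std_gauss2 = std_gauss"
  unfolding std_gauss2_def std_gauss_def
  by (intro arg_cong[where f="density lborel"] ext)
     (simp add: prod_Basis_prod prod_Basis_vec split_beta)

section \<open>The Gaussian component N_q\<close>

lemma sets_ngsm_gauss [measurable_cong]: "sets (ngsm_gauss m1 m2 v1 v2 \<rho>) = sets borel"
  by (simp add: ngsm_gauss_def)

definition ngsm_affine :: "real^'d \<Rightarrow> real^'d \<Rightarrow> real^'d \<Rightarrow> real^'d \<Rightarrow> real \<Rightarrow>
    (real^'d) \<times> (real^'d) \<Rightarrow> (real^'d) \<times> (real^'d)" where
  "ngsm_affine m1 m2 v1 v2 \<rho> z =
     ((\<chi> i. m1 $ i + sdev v1 $ i * fst z $ i),
      (\<chi> i. m2 $ i + sdev v2 $ i * (\<rho> * fst z $ i + sqrt (1 - \<rho>\<^sup>2) * snd z $ i)))"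

lemma ngsm_gauss_eq_distr: "ngsm_gauss m1 m2 v1 v2 \<rho> = distr std_gauss borel (ngsm_affine m1 m2 v1 v2 \<rho>)"
  unfolding ngsm_gauss_def ngsm_affine_def[abs_def] std_gauss2_eq_std_gauss
  by (simp add: case_prod_beta')

lemma measurable_ngsm_affine: "ngsm_affine m1 m2 v1 v2 \<rho> \<in> borel_measurable std_gauss"
  unfolding ngsm_affine_def[abs_def] measurable_cong_sets[OF sets_std_gauss refl]
  by (intro borel_measurable_continuous_onI continuous_intros)

lemma prob_space_ngsm_gauss: "prob_space (ngsm_gauss m1 m2 v1 v2 \<rho>)"
  unfolding ngsm_gauss_eq_distr
  by (rule prob_space.prob_space_distr[OF prob_space_std_gauss measurable_ngsm_affine])

text \<open>If ngsm_affine z = (m1, m2) + A z, then ngsm_adjoint y1 y2 = A^T (y1, -y2).\<close>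

definition ngsm_adjoint :: "real^'d \<Rightarrow> real^'d \<Rightarrow> real \<Rightarrow> real^'d \<Rightarrow> real^'d \<Rightarrow> (real^'d) \<times> (real^'d)" where
  "ngsm_adjoint v1 v2 \<rho> y1 y2 =
     ((\<chi> i. sdev v1 $ i * y1 $ i - \<rho> * sdev v2 $ i * y2 $ i),
      (\<chi> i. - (sqrt (1 - \<rho>\<^sup>2) * sdev v2 $ i * y2 $ i)))"

lemma phase_ngsm_affine:
  "fst (ngsm_affine m1 m2 v1 v2 \<rho> z) \<bullet> y1 - snd (ngsm_affine m1 m2 v1 v2 \<rho> z) \<bullet> y2
     = (m1 \<bullet> y1 - m2 \<bullet> y2) + ngsm_adjoint v1 v2 \<rho> y1 y2 \<bullet> z"
proof -
  have "fst (ngsm_affine m1 m2 v1 v2 \<rho> z) \<bullet> y1 - snd (ngsm_affine m1 m2 v1 v2 \<rho> z) \<bullet> y2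
      = (\<Sum>i\<in>UNIV. (m1 $ i + sdev v1 $ i * fst z $ i) * y1 $ i
          - (m2 $ i + sdev v2 $ i * (\<rho> * fst z $ i + sqrt (1 - \<rho>\<^sup>2) * snd z $ i)) * y2 $ i)"
    by (simp add: ngsm_affine_def inner_vec_def sum_subtractf)
  also have "\<dots> = (\<Sum>i\<in>UNIV. m1 $ i * y1 $ i - m2 $ i * y2 $ i
      + fst (ngsm_adjoint v1 v2 \<rho> y1 y2) $ i * fst z $ i
      + snd (ngsm_adjoint v1 v2 \<rho> y1 y2) $ i * snd z $ i)"
    by (intro sum.cong refl) (simp add: ngsm_adjoint_def algebra_simps)
  also have "\<dots> = (m1 \<bullet> y1 - m2 \<bullet> y2) + ngsm_adjoint v1 v2 \<rho> y1 y2 \<bullet> z"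
    by (simp add: inner_prod_def inner_vec_def sum.distrib sum_subtractf)
  finally show ?thesis .
qed

lemma cholesky_2x2_quadratic_form:
  fixes s1 s2 r \<rho> y1 y2 :: real
  assumes "r\<^sup>2 = 1 - \<rho>\<^sup>2"
  shows "(s1 * y1 - \<rho> * s2 * y2)\<^sup>2 + (r * s2 * y2)\<^sup>2
       = s1\<^sup>2 * y1 * y1 - 2 * (\<rho> * (s1 * s2) * y1 * y2) + s2\<^sup>2 * y2 * y2"
proof -
  have "(s1 * y1 - \<rho> * s2 * y2)\<^sup>2 + (r * s2 * y2)\<^sup>2
      = s1\<^sup>2 * y1 * y1 - 2 * (\<rho> * (s1 * s2) * y1 * y2) + (\<rho>\<^sup>2 + r\<^sup>2) * s2\<^sup>2 * y2 * y2"
    by (simp add: algebra_simps power2_eq_square)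
  then show ?thesis
    using assms by simp
qed

lemma inner_ngsm_adjoint_self:
  assumes v1: "\<And>i. v1 $ i > 0" and v2: "\<And>i. v2 $ i > 0" and \<rho>: "\<rho> \<in> {-1..1}"
  shows "ngsm_adjoint v1 v2 \<rho> y1 y2 \<bullet> ngsm_adjoint v1 v2 \<rho> y1 y2
       = diag_form v1 y1 y1 - 2 * diag_form (\<chi> i. \<rho> * (sdev v1 $ i * sdev v2 $ i)) y1 y2
         + diag_form v2 y2 y2"
proof -
  have r_sq: "(sqrt (1 - \<rho>\<^sup>2))\<^sup>2 = 1 - \<rho>\<^sup>2"
    using \<rho> by (simp add: abs_square_le_1 abs_le_iff)
  have sdev_sq: "(sdev v $ i)\<^sup>2 = v $ i" if "v $ i > 0" for v :: "real^'d" and i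
    using that by (simp add: sdev_def)
  have "ngsm_adjoint v1 v2 \<rho> y1 y2 \<bullet> ngsm_adjoint v1 v2 \<rho> y1 y2
      = (\<Sum>i\<in>UNIV. (sdev v1 $ i * y1 $ i - \<rho> * sdev v2 $ i * y2 $ i)\<^sup>2
          + (sqrt (1 - \<rho>\<^sup>2) * sdev v2 $ i * y2 $ i)\<^sup>2)"
    by (simp add: ngsm_adjoint_def inner_prod_def inner_vec_def sum.distrib power2_eq_square)
  also have "\<dots> = (\<Sum>i\<in>UNIV. v1 $ i * y1 $ i * y1 $ i
      - 2 * (\<rho> * (sdev v1 $ i * sdev v2 $ i) * y1 $ i * y2 $ i) + v2 $ i * y2 $ i * y2 $ i)"
    by (simp add: cholesky_2x2_quadratic_form[OF r_sq] sdev_sq v1 v2)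
  also have "\<dots> = diag_form v1 y1 y1 - 2 * diag_form (\<chi> i. \<rho> * (sdev v1 $ i * sdev v2 $ i)) y1 y2
      + diag_form v2 y2 y2"
    by (simp add: diag_form_def sum.distrib sum_subtractf sum_distrib_left)
  finally show ?thesis .
qed

lemma integral_cos_ngsm_gauss:
  fixes m1 m2 v1 v2 y1 y2 :: "real^'d" and \<rho> :: real
  assumes v1: "\<And>i. v1 $ i > 0" and v2: "\<And>i. v2 $ i > 0" and \<rho>: "\<rho> \<in> {-1..1}"
  shows "(\<integral>w. cos (fst w \<bullet> y1 - snd w \<bullet> y2) \<partial>ngsm_gauss m1 m2 v1 v2 \<rho>) =
    exp (- (1/2) * (diag_form v1 y1 y1 - 2 * diag_form (\<chi> i. \<rho> * (sdev v1 $ i * sdev v2 $ i)) y1 y2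
       + diag_form v2 y2 y2)) * cos (m1 \<bullet> y1 - m2 \<bullet> y2)"
proof -
  let ?a = "ngsm_adjoint v1 v2 \<rho> y1 y2"
  have exp_cos: "cos C * exp (- V / 2) = exp (- (1/2) * V) * cos C" for C V :: real
    by (simp add: mult.commute)
  have "(\<integral>w. cos (fst w \<bullet> y1 - snd w \<bullet> y2) \<partial>ngsm_gauss m1 m2 v1 v2 \<rho>)
      = (\<integral>z. cos ((m1 \<bullet> y1 - m2 \<bullet> y2) + ?a \<bullet> z) \<partial>std_gauss)"
    by (simp add: ngsm_gauss_eq_distr integral_distr[OF measurable_ngsm_affine]
        borel_measurable_continuous_onI continuous_intros phase_ngsm_affine)
  also have "\<dots> = cos (m1 \<bullet> y1 - m2 \<bullet> y2) * exp (- (?a \<bullet> ?a) / 2)"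
    by (rule integral_cos_std_gauss)
  finally show ?thesis
    by (simp only: exp_cos inner_ngsm_adjoint_self[OF v1 v2 \<rho>])
qed

section \<open>Symmetrisation by a random sign\<close>

definition random_sign :: "'a::real_normed_vector measure \<Rightarrow> 'a measure" where
  "random_sign N =
     distr (measure_pmf (bernoulli_pmf (1/2)) \<Otimes>\<^sub>M N) borel (\<lambda>(b, w). if b then w else - w)"

lemma ngsm_s_eq_random_sign: "ngsm_s m1 m2 v1 v2 \<rho> = random_sign (ngsm_gauss m1 m2 v1 v2 \<rho>)"
  by (simp add: ngsm_s_def random_sign_def)

lemma sets_random_sign [measurable_cong]: "sets (random_sign N) = sets borel"
  by (simp add: random_sign_def)

lemma measurable_sign_flip:
  fixes N :: "'a::{real_normed_vector, second_countable_topology} measure"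
  assumes "sets N = sets borel"
  shows "(\<lambda>(b, w). if b then w else - w) \<in> measurable (measure_pmf (bernoulli_pmf (1/2)) \<Otimes>\<^sub>M N) borel"
proof -
  have [measurable]: "snd \<in> measurable (measure_pmf (bernoulli_pmf (1/2)) \<Otimes>\<^sub>M N) borel"
    using measurable_snd[of "measure_pmf (bernoulli_pmf (1/2))" N]
    by (simp add: measurable_cong_sets[OF refl assms])
  show ?thesis
    unfolding case_prod_beta' by measurable
qed

lemma prob_space_random_sign:
  fixes N :: "'a::{real_normed_vector, second_countable_topology} measure"
  assumes "prob_space N" "sets N = sets borel"
  shows "prob_space (random_sign N)"
  unfolding random_sign_def
  by (intro prob_space.prob_space_distr prob_space_pair assms measurable_sign_flip
        prob_space_measure_pmf)

lemma (in prob_space) distr_pair_snd: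
  assumes "sigma_finite_measure N"
  shows "distr (M \<Otimes>\<^sub>M N) N snd = N"
proof (intro measure_eqI)
  interpret N: sigma_finite_measure N by fact
  fix A assume A: "A \<in> sets (distr (M \<Otimes>\<^sub>M N) N snd)"
  then have "emeasure (distr (M \<Otimes>\<^sub>M N) N snd) A = emeasure (M \<Otimes>\<^sub>M N) (space M \<times> A)"
    by (auto simp: emeasure_distr space_pair_measure dest: sets.sets_into_space
        intro!: arg_cong2[where f=emeasure])
  with A show "emeasure (distr (M \<Otimes>\<^sub>M N) N snd) A = emeasure N A"
    by (simp add: N.emeasure_pair_measure_Times emeasure_space_1)
qed simp

lemma integral_random_sign_even:
  fixes N :: "'a::{real_normed_vector, second_countable_topology} measure"
    and f :: "'a \<Rightarrow> real"
  assumes N: "prob_space N" "sets N = sets borel"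
    and even: "\<And>w. f (- w) = f w" and f: "f \<in> borel_measurable borel"
  shows "(\<integral>w. f w \<partial>random_sign N) = (\<integral>w. f w \<partial>N)"
proof -
  let ?P = "measure_pmf (bernoulli_pmf (1/2)) \<Otimes>\<^sub>M N"
  have "(\<integral>w. f w \<partial>random_sign N) = (\<integral>x. f ((\<lambda>(b, w). if b then w else - w) x) \<partial>?P)"
    unfolding random_sign_def by (rule integral_distr[OF measurable_sign_flip[OF N(2)] f])
  also have "\<dots> = (\<integral>x. f (snd x) \<partial>?P)"
    by (intro Bochner_Integration.integral_cong refl) (simp add: case_prod_beta' even)
  also have "\<dots> = (\<integral>w. f w \<partial>distr ?P N snd)"
    by (rule integral_distr[symmetric, OF measurable_snd])
       (simp add: measurable_cong_sets[OF N(2) refl] f)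
  also have "\<dots> = (\<integral>w. f w \<partial>N)"
    by (simp add: prob_space.distr_pair_snd prob_space_measure_pmf N(1) prob_space_imp_sigma_finite)
  finally show ?thesis .
qed

section \<open>Feature products\<close>

definition paired_cos_sum :: "'a::real_inner \<Rightarrow> 'a \<Rightarrow> 'a \<times> 'a \<Rightarrow> real" where
  "paired_cos_sum x1 x2 w = cos (fst w \<bullet> x1 - snd w \<bullet> x2) + cos (fst w \<bullet> x2 - snd w \<bullet> x1)
     + cos (fst w \<bullet> (x1 - x2)) + cos (snd w \<bullet> (x1 - x2))"

lemma cos_sin_sum_product:
  fixes a1 a2 b1 b2 :: real
  shows "(cos a1 + cos a2) * (cos b1 + cos b2) + (sin a1 + sin a2) * (sin b1 + sin b2)
       = cos (a1 - b2) + cos (b1 - a2) + cos (a1 - b1) + cos (a2 - b2)"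
  by (simp add: cos_diff algebra_simps)

lemma paired_cos_sum_eq_feature_product:
  "paired_cos_sum x1 x2 w
     = (cos (fst w \<bullet> x1) + cos (snd w \<bullet> x1)) * (cos (fst w \<bullet> x2) + cos (snd w \<bullet> x2))
     + (sin (fst w \<bullet> x1) + sin (snd w \<bullet> x1)) * (sin (fst w \<bullet> x2) + sin (snd w \<bullet> x2))"
  by (simp add: paired_cos_sum_def cos_sin_sum_product inner_diff_right)

lemma sum_lessThan_double:
  fixes g :: "nat \<Rightarrow> 'a::comm_monoid_add"
  shows "(\<Sum>j<2 * K. g j) = (\<Sum>j<K. g j + g (K + j))"
proof -
  have "{..<2 * K} = {..<K} \<union> {K..<K + K}"
    by auto
  then have "(\<Sum>j<2 * K. g j) = (\<Sum>j<K. g j) + (\<Sum>j\<in>{K..<K + K}. g j)"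
    by (simp add: sum.union_disjoint[symmetric] ivl_disj_int)
  also have "(\<Sum>j\<in>{K..<K + K}. g j) = (\<Sum>j<K. g (K + j))"
    using sum.shift_bounds_nat_ivl[of g 0 K K] by (simp add: lessThan_atLeast0 add.commute)
  finally show ?thesis
    by (simp add: sum.distrib)
qed

lemma ngsm_block_inner_eq:
  assumes L: "L = 2 * K" and alpha: "alpha q \<ge> 0"
  shows "(\<Sum>j<L. ngsm_feat L alpha W q x1 j * ngsm_feat L alpha W q x2 j)
       = (\<Sum>l<K. alpha q / (2 * real L) * paired_cos_sum x1 x2 (W (q, l)))"
proof -
  define c where "c = sqrt (alpha q) * sqrt (1 / (2 * real L))"
  have c_sq: "c * c = alpha q / (2 * real L)"
    using alpha by (simp add: c_def real_sqrt_mult[symmetric])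
  have cos_entry:
    "ngsm_feat L alpha W q x l = c * (cos (fst (W (q, l)) \<bullet> x) + cos (snd (W (q, l)) \<bullet> x))"
    if "l < K" for x l
    using that by (simp add: ngsm_feat_def L c_def)
  have sin_entry:
    "ngsm_feat L alpha W q x (K + l) = c * (sin (fst (W (q, l)) \<bullet> x) + sin (snd (W (q, l)) \<bullet> x))"
    for x l
    by (simp add: ngsm_feat_def L c_def)
  show ?thesis
    unfolding L sum_lessThan_double
    by (intro sum.cong refl)
       (simp add: cos_entry sin_entry paired_cos_sum_eq_feature_product flip: L c_sq,
        simp add: algebra_simps)
qed

lemma ngsm_inner_eq_sum:
  assumes L: "L = 2 * K" and alpha: "\<And>q. q < Q \<Longrightarrow> alpha q \<ge> 0"
  shows "ngsm_inner Q L alpha W x1 x2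
       = (\<Sum>i\<in>{..<Q} \<times> {..<K}. alpha (fst i) / (2 * real L) * paired_cos_sum x1 x2 (W i))"
proof -
  have "ngsm_inner Q L alpha W x1 x2
      = (\<Sum>q<Q. \<Sum>l<K. alpha q / (2 * real L) * paired_cos_sum x1 x2 (W (q, l)))"
    unfolding ngsm_inner_def by (intro sum.cong refl ngsm_block_inner_eq[OF L alpha]) simp
  then show ?thesis
    by (simp add: sum.cartesian_product case_prod_beta)
qed

lemma paired_cos_sum_eq_cos_diffs:
  "paired_cos_sum x1 x2 w = cos (fst w \<bullet> x1 - snd w \<bullet> x2) + cos (fst w \<bullet> x2 - snd w \<bullet> x1)
     + cos (fst w \<bullet> (x1 - x2) - snd w \<bullet> 0) + cos (fst w \<bullet> 0 - snd w \<bullet> (x1 - x2))"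
  by (simp add: paired_cos_sum_def)

lemma integrable_cos_inner_diff:
  fixes M :: "('a::real_inner \<times> 'a) measure"
  assumes "prob_space M" "sets M = sets borel"
  shows "integrable M (\<lambda>w. cos (fst w \<bullet> y1 - snd w \<bullet> y2))"
proof -
  interpret prob_space M by fact
  show ?thesis
    by (rule integrable_const_bound[where B=1])
       (simp_all add: measurable_cong_sets[OF assms(2) refl] borel_measurable_continuous_onI
          continuous_intros)
qed

lemma integrable_paired_cos_sum:
  fixes M :: "('a::real_inner \<times> 'a) measure"
  assumes "prob_space M" "sets M = sets borel"
  shows "integrable M (paired_cos_sum x1 x2)"
  unfolding paired_cos_sum_eq_cos_diffs[abs_def]
  by (intro Bochner_Integration.integrable_add integrable_cos_inner_diff[OF assms])

lemma diag_form_commute: "diag_form v x y = diag_form v y x"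
  by (simp add: diag_form_def mult.commute mult.left_commute)

lemma diag_form_zero [simp]: "diag_form v x 0 = 0" "diag_form v 0 y = 0"
  by (simp_all add: diag_form_def)

lemma integral_paired_cos_sum_ngsm_s:
  fixes m1 m2 v1 v2 x1 x2 :: "real^'d" and \<rho> :: real
  assumes v1: "\<And>i. v1 $ i > 0" and v2: "\<And>i. v2 $ i > 0" and \<rho>: "\<rho> \<in> {-1..1}"
  shows "(\<integral>w. paired_cos_sum x1 x2 w \<partial>ngsm_s m1 m2 v1 v2 \<rho>) =
    (let S1 = v1; S2 = v2; Sc = (\<chi> i. \<rho> * (sdev v1 $ i * sdev v2 $ i)) in
       exp (- (1/2) * (diag_form S1 x1 x1 - 2 * diag_form Sc x1 x2 + diag_form S2 x2 x2))
         * cos (m1 \<bullet> x1 - m2 \<bullet> x2)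
     + exp (- (1/2) * (diag_form S1 x2 x2 - 2 * diag_form Sc x1 x2 + diag_form S2 x1 x1))
         * cos (m1 \<bullet> x2 - m2 \<bullet> x1)
     + exp (- (1/2) * diag_form S1 (x1 - x2) (x1 - x2)) * cos (m1 \<bullet> (x1 - x2))
     + exp (- (1/2) * diag_form S2 (x1 - x2) (x1 - x2)) * cos (m2 \<bullet> (x1 - x2)))"
proof -
  let ?G = "ngsm_gauss m1 m2 v1 v2 \<rho>"
  let ?I = "\<lambda>y1 y2. \<integral>w. cos (fst w \<bullet> y1 - snd w \<bullet> y2) \<partial>?G"
  have G: "prob_space ?G" "sets ?G = sets borel"
    by (simp_all add: prob_space_ngsm_gauss sets_ngsm_gauss)
  have even: "paired_cos_sum x1 x2 (- w) = paired_cos_sum x1 x2 w" for w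
    by (simp add: paired_cos_sum_def cos_diff)
  have meas: "paired_cos_sum x1 x2 \<in> borel_measurable borel"
    unfolding paired_cos_sum_def[abs_def] by (intro borel_measurable_continuous_onI continuous_intros)
  have "(\<integral>w. paired_cos_sum x1 x2 w \<partial>ngsm_s m1 m2 v1 v2 \<rho>) = (\<integral>w. paired_cos_sum x1 x2 w \<partial>?G)"
    unfolding ngsm_s_eq_random_sign by (rule integral_random_sign_even[OF G even meas])
  also have "\<dots> = ?I x1 x2 + ?I x2 x1 + ?I (x1 - x2) 0 + ?I 0 (x1 - x2)"
    unfolding paired_cos_sum_eq_cos_diffs[abs_def]
    by (simp only: Bochner_Integration.integral_add Bochner_Integration.integrable_add
        integrable_cos_inner_diff[OF G])
  finally show ?thesis
    unfolding integral_cos_ngsm_gauss[OF v1 v2 \<rho>]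
    by (simp add: Let_def diag_form_commute[of _ x2 x1])
qed

lemma k_ngsm_eq_integral:
  assumes "\<And>q i. q < Q \<Longrightarrow> v1 q $ i > 0" "\<And>q i. q < Q \<Longrightarrow> v2 q $ i > 0"
    and "\<And>q. q < Q \<Longrightarrow> rho q \<in> {-1..1}"
  shows "k_ngsm Q alpha mu1 mu2 v1 v2 rho x1 x2 = (1/4) *
    (\<Sum>q<Q. alpha q * (\<integral>w. paired_cos_sum x1 x2 w \<partial>ngsm_s (mu1 q) (mu2 q) (v1 q) (v2 q) (rho q)))"
  unfolding k_ngsm_def
  by (intro arg_cong[where f="(*) (1/4)"] sum.cong refl arg_cong[where f="(*) _"]
        integral_paired_cos_sum_ngsm_s[symmetric])
     (use assms in auto)

lemma integral_PiM_sum_components: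
  fixes f :: "'i \<Rightarrow> 'a \<Rightarrow> 'b::{banach, second_countable_topology}"
  assumes I: "finite I" and M: "\<And>i. i \<in> I \<Longrightarrow> prob_space (M i)"
    and f: "\<And>i. i \<in> I \<Longrightarrow> integrable (M i) (f i)"
  shows "(\<integral>W. (\<Sum>i\<in>I. f i (W i)) \<partial>PiM I M) = (\<Sum>i\<in>I. \<integral>w. f i w \<partial>M i)"
proof -
  have component: "integrable (PiM I M) (\<lambda>W. f i (W i))
      \<and> (\<integral>W. f i (W i) \<partial>PiM I M) = (\<integral>w. f i w \<partial>M i)" if i: "i \<in> I" for i
  proof -
    have meas: "(\<lambda>W. W i) \<in> measurable (PiM I M) (M i)"
      by (rule measurable_component_singleton[OF i])
    have fm: "f i \<in> borel_measurable (M i)"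
      using f[OF i] by (rule borel_measurable_integrable)
    have distr: "distr (PiM I M) (M i) (\<lambda>W. W i) = M i"
      by (rule distr_PiM_component[OF M i])
    show ?thesis
      using f[OF i] integrable_distr_eq[OF meas fm] integral_distr[OF meas fm]
      unfolding distr by simp
  qed
  show ?thesis
    using component I by (simp add: Bochner_Integration.integral_sum)
qed

theorem theorem3:
  fixes Q L :: nat
    and alpha :: "nat \<Rightarrow> real"
    and mu1 mu2 v1 v2 :: "nat \<Rightarrow> real ^ 'd"
    and rho :: "nat \<Rightarrow> real"
    and x1 x2 :: "real ^ 'd"
  assumes "Q \<ge> 1"
    and "even L" and "L > 0"
    and "\<And>q. q < Q \<Longrightarrow> alpha q \<ge> 0"
    and "\<And>q i. q < Q \<Longrightarrow> v1 q $ i > 0"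
    and "\<And>q i. q < Q \<Longrightarrow> v2 q $ i > 0"
    and "\<And>q. q < Q \<Longrightarrow> rho q \<in> {-1..1}"
  shows "(\<integral>W. ngsm_inner Q L alpha W x1 x2 \<partial>ngsm_joint Q L mu1 mu2 v1 v2 rho)
           = k_ngsm Q alpha mu1 mu2 v1 v2 rho x1 x2"
proof -
  obtain K where L: "L = 2 * K"
    using \<open>even L\<close> by blast
  let ?I = "{..<Q} \<times> {..<K}"
  let ?s = "\<lambda>q. ngsm_s (mu1 q) (mu2 q) (v1 q) (v2 q) (rho q)"
  let ?E = "\<lambda>q. \<integral>w. paired_cos_sum x1 x2 w \<partial>?s q"
  have joint: "ngsm_joint Q L mu1 mu2 v1 v2 rho = PiM ?I (\<lambda>i. ?s (fst i))"
    by (simp add: ngsm_joint_def L case_prod_unfold)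
  have s: "prob_space (?s q)" "sets (?s q) = sets borel" for q
    by (simp_all add: ngsm_s_eq_random_sign prob_space_random_sign prob_space_ngsm_gauss
        sets_ngsm_gauss sets_random_sign)
  have "(\<integral>W. ngsm_inner Q L alpha W x1 x2 \<partial>ngsm_joint Q L mu1 mu2 v1 v2 rho)
      = (\<integral>W. (\<Sum>i\<in>?I. alpha (fst i) / (2 * real L) * paired_cos_sum x1 x2 (W i)) \<partial>PiM ?I (\<lambda>i. ?s (fst i)))"
    by (simp add: joint ngsm_inner_eq_sum[OF L assms(4)])
  also have "\<dots> = (\<Sum>i\<in>?I. alpha (fst i) / (2 * real L) * ?E (fst i))"
    by (subst integral_PiM_sum_components)
       (auto intro!: integrable_divide integrable_mult_right integrable_paired_cos_sum s)
  also have "\<dots> = (\<Sum>q<Q. real K * (alpha q / (2 * real L) * ?E q))"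
    by (simp add: sum.cartesian_product')
  also have "\<dots> = (1/4) * (\<Sum>q<Q. alpha q * ?E q)"
    using \<open>L > 0\<close> by (simp add: L sum_distrib_left)
  also have "\<dots> = k_ngsm Q alpha mu1 mu2 v1 v2 rho x1 x2"
    by (rule k_ngsm_eq_integral[symmetric, OF assms(5-7)])
  finally show ?thesis .
qed

end
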